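(* Let $k\ge 3$ be an odd integer. Then $S_3(k;k)\ge 2(k^2-k-1)$.
   Context: Let $k,r$ be positive integers with $r\mid k$. A solution to $\mathcal{E}$ is a $k$-tuple $(x_1,\dots,x_k)$ of positive integers (not necessarily distinct) with $\sum_{i=1}^{k-1}x_i=x_k$; it lies in $[1,n]$ if all $x_i\in\{1,\dots,n\}$. Given a coloring $\chi$ of $[1,n]$ with colors in $\{0,1,\dots,r-1\}$ (viewed as integers), a solution is $r$-zero-sum if $\sum_{i=1}^k\chi(x_i)\equiv 0\pmod r$. $S_3(k;r)$ denotes the least positive integer $n$ such that every coloring $\chi:[1,n]\to\{0,1,\dots,r-1\}$ admits an $r$-zero-sum solution to $\mathcal{E}$ in $[1,n]$. *)

theory Defs
  imports Main
begin

definition is_solution :: "nat \<Rightarrow> (nat \<Rightarrow> nat) \<Rightarrow> bool" where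
  "is_solution k x \<longleftrightarrow> (\<forall>i\<in>{1..k}. x i \<ge> 1) \<and> (\<Sum>i=1..<k. x i) = x k"

definition sol_in :: "nat \<Rightarrow> nat \<Rightarrow> (nat \<Rightarrow> nat) \<Rightarrow> bool" where
  "sol_in k n x \<longleftrightarrow> is_solution k x \<and> (\<forall>i\<in>{1..k}. x i \<le> n)"

definition zero_sum :: "nat \<Rightarrow> nat \<Rightarrow> (nat \<Rightarrow> nat) \<Rightarrow> (nat \<Rightarrow> nat) \<Rightarrow> bool" where
  "zero_sum k r \<chi> x \<longleftrightarrow> (\<Sum>i=1..k. \<chi> (x i)) mod r = 0"

definition S3_property :: "nat \<Rightarrow> nat \<Rightarrow> nat \<Rightarrow> bool" where
  "S3_property k r n \<longleftrightarrow>
     (\<forall>\<chi>. (\<forall>m\<in>{1..n}. \<chi> m < r) \<longrightarrow> (\<exists>x. sol_in k n x \<and> zero_sum k r \<chi> x))"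

definition S3 :: "nat \<Rightarrow> nat \<Rightarrow> nat" where
  "S3 k r = (LEAST n. n \<ge> 1 \<and> S3_property k r n)"

end

theory Submission
  imports Defs "HOL-Library.Ramsey"
begin

text \<open>By Ramsey's theorem for pairs, colouring \<open>{a, b}\<close> by \<open>\<chi> \<bar>a - b\<bar>\<close> yields \<open>k\<close> numbers whose
  pairwise differences all have the same colour; the consecutive gaps together with the total
  span form a monochromatic solution, so \<open>S\<^sub>3(k; r)\<close> exists whenever \<open>r\<close> divides \<open>k\<close>.

  For the lower bound, colour odd numbers by \<open>(k + 1)/2\<close> and an even number \<open>2y\<close> by \<open>1\<close> if
  \<open>k - 1 \<le> y \<le> k\<^sup>2 - 2k\<close> and by \<open>0\<close> otherwise. A solution has an even number \<open>2j\<close> of odd entries,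
  so its colour sum is \<open>jk + j + q\<close> with \<open>q\<close> at most the number \<open>k - 2j\<close> of even entries. If
  \<open>j > 0\<close> then \<open>0 < j + q < k\<close>. If \<open>j = 0\<close>, halving gives a solution in \<open>[1, k\<^sup>2 - k - 2]\<close>,
  and no such solution lies entirely inside or entirely outside the band \<open>[k - 1, k\<^sup>2 - 2k]\<close>, so
  again \<open>0 < q < k\<close>.\<close>

lemma sum_differences_telescope:
  fixes v :: "nat \<Rightarrow> nat"
  assumes "mono_on {..m} v"
  shows "(\<Sum>j=1..<Suc m. v j - v (j - 1)) = v m - v 0"
  using assms
proof (induction m)
  case (Suc m)
  have "mono_on {..m} v" using Suc.prems by (rule mono_on_subset) auto
  moreover have "v 0 \<le> v m" "v m \<le> v (Suc m)"
    using Suc.prems by (auto intro: mono_onD)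
  ultimately show ?case using Suc.IH by simp
qed simp

definition difference_solution :: "nat \<Rightarrow> (nat \<Rightarrow> nat) \<Rightarrow> nat \<Rightarrow> nat" where
  "difference_solution k v j = (if j < k then v j - v (j - 1) else v (k - 1) - v 0)"

lemma is_solution_difference_solution:
  fixes v :: "nat \<Rightarrow> nat"
  assumes "2 \<le> k" and incr: "\<And>a b. a < b \<Longrightarrow> b < k \<Longrightarrow> v a < v b"
  shows "is_solution k (difference_solution k v)"
proof -
  have "(\<Sum>j=1..<Suc (k - 1). v j - v (j - 1)) = v (k - 1) - v 0"
    by (rule sum_differences_telescope) (auto intro!: mono_onI simp: le_less incr)
  then have "(\<Sum>j=1..<k. difference_solution k v j) = difference_solution k v k"
    using assms(1) by (simp add: difference_solution_def)
  moreover have "difference_solution k v j \<ge> 1" if "j \<in> {1..k}" for j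
  proof (cases "j < k")
    case True
    then show ?thesis using that incr[of "j - 1" j] by (simp add: difference_solution_def)
  next
    case False
    then show ?thesis using assms(1) incr[of 0 "k - 1"] by (simp add: difference_solution_def)
  qed
  ultimately show ?thesis unfolding is_solution_def by blast
qed

lemma difference_solution_entry:
  assumes "2 \<le> k" and "j \<in> {1..k}"
  obtains a b where "a < b" "b < k" "difference_solution k v j = v b - v a"
proof (cases "j < k")
  case True
  then show ?thesis using assms that[of "j - 1" j] by (simp add: difference_solution_def)
next
  case False
  then show ?thesis using assms that[of 0 "k - 1"] by (simp add: difference_solution_def)
qed

lemma finite_set_increasing_enumeration:
  fixes H :: "'a::linorder set"
  assumes "finite H"
  obtains v where "\<And>a b. a < b \<Longrightarrow> b < card H \<Longrightarrow> v a < v b" and "\<And>a. a < card H \<Longrightarrow> v a \<in> H"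
proof
  show "sorted_list_of_set H ! a < sorted_list_of_set H ! b" if "a < b" "b < card H" for a b
    using sorted_wrt_nth_less[OF strict_sorted_list_of_set, of a b H] that assms by simp
  show "sorted_list_of_set H ! a \<in> H" if "a < card H" for a
    using that assms by (metis length_sorted_list_of_set nth_mem set_sorted_list_of_set)
qed

lemma monochromatic_solution_exists:
  fixes k r :: nat
  assumes "2 \<le> k"
  shows "\<exists>n\<ge>1. \<forall>\<chi>. (\<forall>m\<in>{1..n}. \<chi> m < r) \<longrightarrow>
                   (\<exists>x c. sol_in k n x \<and> (\<forall>i\<in>{1..k}. \<chi> (x i) = c))"
proof -
  obtain N :: nat where ramsey: "partn_lst {..<N} (replicate r k) 2"
    using ramsey_full by blast
  define n where "n = max 1 N"
  have "\<exists>x c. sol_in k n x \<and> (\<forall>i\<in>{1..k}. \<chi> (x i) = c)"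
    if \<chi>: "\<forall>m\<in>{1..n}. \<chi> m < r" for \<chi>
  proof -
    define f where "f A = \<chi> (Max A - Min A)" for A :: "nat set"
    have f_colouring: "f \<in> [{..<N}]\<^bsup>2\<^esup> \<rightarrow> {..<r}"
    proof
      fix A assume "A \<in> [{..<N}]\<^bsup>2\<^esup>"
      then obtain a b where "A = {a, b}" "a < N" "b < N" "a \<noteq> b"
        by (auto elim: nsets2_E)
      then have "Max A - Min A \<in> {1..n}" unfolding n_def by auto
      then show "f A \<in> {..<r}" using \<chi> unfolding f_def by auto
    qed
    obtain c H where c: "c < length (replicate r k)"
      and H: "H \<in> [{..<N}]\<^bsup>(replicate r k ! c)\<^esup>" and mono: "f ` [H]\<^bsup>2\<^esup> \<subseteq> {c}"
      using partn_lstE[OF ramsey f_colouring length_replicate] .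
    have H_props: "finite H" "card H = k" "H \<subseteq> {..<N}" using H c by (auto simp: nsets_def)
    then obtain v where incr: "\<And>a b. a < b \<Longrightarrow> b < k \<Longrightarrow> v a < v b"
      and v_in_H: "\<And>a. a < k \<Longrightarrow> v a \<in> H"
      by (metis finite_set_increasing_enumeration)
    have "v b - v a \<le> n \<and> \<chi> (v b - v a) = c" if "a < b" "b < k" for a b
    proof -
      have "{v a, v b} \<in> [H]\<^bsup>2\<^esup>" using v_in_H that incr[OF that] by (auto simp: nsets_def)
      then have "f {v a, v b} = c" using mono by blast
      moreover have "v b < N" using v_in_H[of b] that H_props(3) by auto
      ultimately show ?thesis using incr[OF that] unfolding f_def n_def by simp
    qed
    then have "difference_solution k v j \<le> n \<and> \<chi> (difference_solution k v j) = c"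
      if "j \<in> {1..k}" for j
      using difference_solution_entry[OF assms that] by metis
    then show ?thesis
      using is_solution_difference_solution[of k v, OF assms incr] unfolding sol_in_def by blast
  qed
  moreover have "1 \<le> n" unfolding n_def by simp
  ultimately show ?thesis by blast
qed

lemma S3_property_exists:
  assumes "2 \<le> k" and "r dvd k"
  shows "\<exists>n\<ge>1. S3_property k r n"
proof -
  obtain n where "1 \<le> n"
    and mono: "\<forall>\<chi>. (\<forall>m\<in>{1..n}. \<chi> m < r) \<longrightarrow>
                  (\<exists>x c. sol_in k n x \<and> (\<forall>i\<in>{1..k}. \<chi> (x i) = c))"
    using monochromatic_solution_exists[OF assms(1)] by blast
  have "S3_property k r n"
    unfolding S3_property_def
  proof (intro allI impI)
    fix \<chi> :: "nat \<Rightarrow> nat"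
    assume "\<forall>m\<in>{1..n}. \<chi> m < r"
    then obtain x c where x: "sol_in k n x" and "\<forall>i\<in>{1..k}. \<chi> (x i) = c"
      using mono by blast
    then have "(\<Sum>i=1..k. \<chi> (x i)) = k * c" by simp
    then have "zero_sum k r \<chi> x" using assms(2) unfolding zero_sum_def by simp
    with x show "\<exists>x. sol_in k n x \<and> zero_sum k r \<chi> x" by blast
  qed
  with \<open>1 \<le> n\<close> show ?thesis by blast
qed

lemma S3_property_mono:
  assumes "S3_property k r n" and "n \<le> n'"
  shows "S3_property k r n'"
  unfolding S3_property_def
proof (intro allI impI)
  fix \<chi> :: "nat \<Rightarrow> nat"
  assume "\<forall>m\<in>{1..n'}. \<chi> m < r"
  then have "\<forall>m\<in>{1..n}. \<chi> m < r" using assms(2) by auto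
  then obtain x where "sol_in k n x" "zero_sum k r \<chi> x"
    using assms(1) unfolding S3_property_def by blast
  then show "\<exists>x. sol_in k n' x \<and> zero_sum k r \<chi> x"
    using assms(2) unfolding sol_in_def by force
qed

lemma less_S3_if_not_S3_property:
  assumes "\<exists>n\<ge>1. S3_property k r n" and "\<not> S3_property k r m"
  shows "m < S3 k r"
proof (rule ccontr)
  assume "\<not> m < S3 k r"
  moreover have "S3_property k r (S3 k r)"
    using LeastI_ex[OF assms(1)] unfolding S3_def by blast
  ultimately have "S3_property k r m" by (simp add: S3_property_mono)
  with assms(2) show False by contradiction
qed

definition band :: "nat \<Rightarrow> nat set" where
  "band k = {k - 1..k * k - 2 * k}"

lemma solution_leaves_band:
  assumes "2 \<le> k" and sol: "is_solution k y"
  shows "\<exists>i\<in>{1..k}. y i \<notin> band k"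
proof (rule ccontr)
  assume "\<not> ?thesis"
  then have inside: "k - 1 \<le> y i \<and> y i \<le> k * k - 2 * k" if "i \<in> {1..k}" for i
    using that unfolding band_def by auto
  have "(k - 1) * (k - 1) = (\<Sum>i=1..<k. k - 1)" by simp
  also have "\<dots> \<le> (\<Sum>i=1..<k. y i)" using inside by (intro sum_mono) auto
  also have "\<dots> = y k" using sol unfolding is_solution_def by simp
  also have "\<dots> \<le> k * k - 2 * k" using inside[of k] assms(1) by simp
  finally have "(k - 1) * (k - 1) \<le> k * k - 2 * k" .
  moreover obtain m where "k = m + 2" using assms(1) by (metis add.commute le_Suc_ex)
  ultimately show False by (simp add: algebra_simps)
qed

lemma solution_meets_band:
  assumes "2 \<le> k" and sol: "sol_in k (k * k - k - 2) y"
  shows "\<exists>i\<in>{1..k}. y i \<in> band k"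
proof (rule ccontr)
  assume "\<not> ?thesis"
  then have outside: "y i < k - 1 \<or> k * k - 2 * k < y i" if "i \<in> {1..k}" for i
    using that unfolding band_def by (meson atLeastAtMost_iff not_le)
  have pos: "1 \<le> y i" and bounded: "y i \<le> k * k - k - 2" if "i \<in> {1..k}" for i
    using sol that unfolding sol_in_def is_solution_def by auto
  have sum_eq: "(\<Sum>i=1..<k. y i) = y k"
    using sol unfolding sol_in_def is_solution_def by simp
  obtain m where m: "k = m + 2" using assms(1) by (metis add.commute le_Suc_ex)
  have "k - 1 = (\<Sum>i=1..<k. 1)" by simp
  also have "\<dots> \<le> y k" unfolding sum_eq[symmetric] using pos by (intro sum_mono) auto
  finally have "k * k - 2 * k < y k" using outside[of k] assms(1) by auto
  \<comment> \<open>A summand above the band makes the sum too large; all summands below it make it too small.\<close>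
  show False
  proof (cases "\<exists>a\<in>{1..<k}. k * k - 2 * k < y a")
    case True
    then obtain a where a: "a \<in> {1..<k}" "k * k - 2 * k < y a" by blast
    have "k - 2 = (\<Sum>i\<in>{1..<k} - {a}. 1)" using a(1) by simp
    also have "\<dots> \<le> (\<Sum>i\<in>{1..<k} - {a}. y i)" using pos by (intro sum_mono) auto
    finally have "y a + (k - 2) \<le> y k"
      unfolding sum_eq[symmetric] sum.remove[OF finite_atLeastLessThan a(1)] by simp
    then show False using a(2) bounded[of k] m by (simp add: algebra_simps)
  next
    case False
    then have "y i \<le> k - 2" if "i \<in> {1..<k}" for i
      using that outside[of i] by fastforce
    then have "y k \<le> (\<Sum>i=1..<k. k - 2)" unfolding sum_eq[symmetric] by (intro sum_mono) auto
    then show False using \<open>k * k - 2 * k < y k\<close> m by (simp add: algebra_simps)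
  qed
qed

lemma card_band_entries:
  assumes "2 \<le> k" and sol: "sol_in k (k * k - k - 2) y"
  shows "0 < card {i\<in>{1..k}. y i \<in> band k}" and "card {i\<in>{1..k}. y i \<in> band k} < k"
proof -
  let ?B = "{i\<in>{1..k}. y i \<in> band k}"
  obtain a where "a \<in> ?B" using solution_meets_band[OF assms] by blast
  then show "0 < card ?B" by (auto simp: card_gt_0_iff)
  obtain b where "b \<in> {1..k} - ?B"
    using solution_leaves_band[OF assms(1)] sol unfolding sol_in_def by blast
  then have "?B \<subset> {1..k}" by blast
  then show "card ?B < k" using psubset_card_mono[of "{1..k}" ?B] by simp
qed

lemma even_card_odd_entries:
  assumes "1 \<le> k" and "is_solution k x"
  shows "even (card {i\<in>{1..k}. odd (x i)})"
proof -
  have "{1..k} = insert k {1..<k}" using assms(1) by auto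
  then have "(\<Sum>i=1..k. x i) = 2 * x k"
    using assms(2) unfolding is_solution_def by simp
  then show ?thesis using even_sum_iff[of "{1..k}" x] by simp
qed

lemma sol_in_halve:
  assumes "sol_in k (2 * m + 1) x" and "\<forall>i\<in>{1..k}. even (x i)"
  shows "sol_in k m (\<lambda>i. x i div 2)"
proof -
  have double: "x i = 2 * (x i div 2)" if "i \<in> {1..k}" for i
    using assms(2) that by simp
  have "2 * (\<Sum>i=1..<k. x i div 2) = (\<Sum>i=1..<k. x i)"
    unfolding sum_distrib_left by (rule sum.cong) (use double in auto)
  also have "\<dots> = 2 * (x k div 2)"
    using assms(1) double[of k] unfolding sol_in_def is_solution_def by (cases k) auto
  finally have "(\<Sum>i=1..<k. x i div 2) = x k div 2" by simp
  moreover have "1 \<le> x i div 2 \<and> x i div 2 \<le> m" if "i \<in> {1..k}" for i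
    using assms(1) double[OF that] that unfolding sol_in_def is_solution_def by fastforce
  ultimately show ?thesis unfolding sol_in_def is_solution_def by blast
qed

definition parity_band_coloring :: "nat \<Rightarrow> nat \<Rightarrow> nat" where
  "parity_band_coloring k z = (if odd z then (k + 1) div 2 else of_bool (z div 2 \<in> band k))"

lemma sum_parity_band_coloring:
  assumes "finite I"
  shows "(\<Sum>i\<in>I. parity_band_coloring k (x i))
           = card {i\<in>I. odd (x i)} * ((k + 1) div 2) + card {i\<in>I. even (x i) \<and> x i div 2 \<in> band k}"
  unfolding parity_band_coloring_def sum.If_cases[OF assms]
  using assms by (simp add: Int_def conj_ac)

lemma not_zero_sum_parity_band_coloring:
  assumes "3 \<le> k" and "odd k" and sol: "sol_in k (2 * (k * k - k - 1) - 1) x"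
  shows "\<not> zero_sum k k (parity_band_coloring k) x"
proof
  assume zero_sum: "zero_sum k k (parity_band_coloring k) x"
  define Odd where "Odd = {i\<in>{1..k}. odd (x i)}"
  have Odd_subset: "Odd \<subseteq> {1..k}" unfolding Odd_def by blast
  define B where "B = {i\<in>{1..k}. even (x i) \<and> x i div 2 \<in> band k}"
  obtain j where j: "card Odd = 2 * j"
    using even_card_odd_entries[of k x] assms(1) sol unfolding sol_in_def Odd_def by fastforce
  have "card Odd * ((k + 1) div 2) = j * (2 * ((k + 1) div 2))" using j by simp
  also have "\<dots> = j * k + j" using assms(2) by simp
  finally have colour_sum: "(\<Sum>i=1..k. parity_band_coloring k (x i)) = j * k + (j + card B)"
    unfolding sum_parity_band_coloring[OF finite_atLeastAtMost] Odd_def[symmetric] B_def[symmetric]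
    by simp
  have "0 < j + card B \<and> j + card B < k"
  proof (cases "j = 0")
    case True
    then have all_even: "\<forall>i\<in>{1..k}. even (x i)" using j unfolding Odd_def by auto
    moreover have "2 * (k * k - k - 1) - 1 = 2 * (k * k - k - 2) + 1"
      using assms(1) mult_le_mono1[OF assms(1), of k] by linarith
    ultimately have "sol_in k (k * k - k - 2) (\<lambda>i. x i div 2)"
      using sol_in_halve sol by metis
    moreover have "B = {i\<in>{1..k}. x i div 2 \<in> band k}" using all_even unfolding B_def by auto
    ultimately show ?thesis using card_band_entries[of k "\<lambda>i. x i div 2"] assms(1) True by simp
  next
    case False
    have "B \<subseteq> {1..k} - Odd" unfolding B_def Odd_def by auto
    moreover have "card ({1..k} - Odd) = k - 2 * j"
      using card_Diff_subset[OF _ Odd_subset] j finite_subset[OF Odd_subset] by simp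
    ultimately have "card B \<le> k - 2 * j" by (metis card_mono finite_Diff finite_atLeastAtMost)
    moreover have "card Odd \<le> k" using card_mono[OF _ Odd_subset] by simp
    ultimately show ?thesis using False j by linarith
  qed
  then show False using zero_sum colour_sum unfolding zero_sum_def by simp
qed

lemma not_S3_property_below:
  assumes "3 \<le> k" and "odd k"
  shows "\<not> S3_property k k (2 * (k * k - k - 1) - 1)"
proof -
  have "\<forall>m\<in>{1..2 * (k * k - k - 1) - 1}. parity_band_coloring k m < k"
    using assms unfolding parity_band_coloring_def by auto
  then show ?thesis
    using not_zero_sum_parity_band_coloring[OF assms] unfolding S3_property_def by blast
qed

theorem proposition7:
  fixes k :: nat
  assumes "k \<ge> 3" and "odd k"
  shows "S3 k k \<ge> 2 * (k^2 - k - 1)"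
proof -
  have "\<exists>n\<ge>1. S3_property k k n" using assms(1) by (intro S3_property_exists) auto
  then have "2 * (k * k - k - 1) - 1 < S3 k k"
    using not_S3_property_below[OF assms] by (rule less_S3_if_not_S3_property)
  then show ?thesis by (simp add: power2_eq_square)
qed

end
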